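(* In the connectivity graph model, let $T=(V,E)$ be a tree shape and $\sigma$ a growth process for $T$ starting from a single node $u_0\in V$. For every root-to-leaf path of $T$ rooted at $u_0$, let $(u_0,u_1,\dots,u_l)$ be the sequence of its turning points in order (the path restricted to its turning points). Then $u_0\mapsto_\sigma u_1\mapsto_\sigma\cdots\mapsto_\sigma u_l$.
   Context: Shapes. Grid points are integer pairs $(x,y)$; two grid points are adjacent if they are at orthogonal (Manhattan) distance $1$. A shape $S=(V,E)$ is a finite connected graph whose nodes occupy distinct grid points and whose edges join only pairs of nodes occupying adjacent points; shapes are considered up to translation. Growth operations. One node, the anchor $u_0$, is stationary; other nodes move relative to it, and a tree is rooted at $u_0$. A growth operation on a node $u$ toward an adjacent grid point $p$ either (i) if $u$ has no edge to $p$, creates a new node $u'$ at $p$ with edge $uu'$; or (ii) if $p$ is occupied by a node $v$ with $uv\in E$, creates a new node $u'$ at $p$, replaces edge $uv$ by edges $uu',u'v$, and translates by one unit, along the axis of $uv$, the part of the tree hanging from whichever of $u,v$ is farther from $u_0$, away from the other endpoint. In one time step a set of operations is applied concurrently, each node receiving at most one operation and all operations having the same cardinal direction; the displacement of each node is the sum of the unit vectors contributed by the operations on its path to $u_0$. The set is collision-free if no two nodes collide during these motions or end at the same point. Growth processes (connectivity graph model). A growth process from an initial shape $S_0$ performs time steps $t=1,2,\dots$, each applying a collision-free set of growth operations to the current shape; no edges are deleted and no edges are created other than by the operations. It grows $S$ from $S_0$ in $t_f$ time steps if the shape obtained after step $t_f$ is $S$. Relations. $u\stackrel{t}{\rightarrow}_\sigma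 v$ means node $u$ generates node $v$ at time step $t$; $u\rightsquigarrow_\sigma v$ means there is a chain $u=w_1\rightarrow_\sigma w_2\rightarrow_\sigma\cdots\rightarrow_\sigma w_m=v$ with $m\ge2$. For turning points $u,v$ of $T$, $u\stackrel{t}{\mapsto}_\sigma v$ means either $u\stackrel{t}{\rightarrow}_\sigma v$, or $u\rightsquigarrow_\sigma u'\stackrel{t}{\rightarrow}_\sigma v$ for some node $u'$ with $u,u',v$ lying on a common straight line segment of the shape at the end of time step $t$; $u\mapsto_\sigma v$ means this holds for some $t\ge1$. A node $w$ of a path is a turning point of the path if it is an endpoint or its two path-neighbors $v_1,v_2$ satisfy $v_1w\perp wv_2$. *)

theory Defs
  imports Complex_Main "HOL-Library.Product_Plus"
begin

type_synonym pt = "int \<times> int"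

definition grid_adj :: "pt \<Rightarrow> pt \<Rightarrow> bool" where
  "grid_adj p q \<longleftrightarrow> \<bar>fst p - fst q\<bar> + \<bar>snd p - snd q\<bar> = 1"

text \<open>Edges are unordered pairs, represented as two-element sets.\<close>
definition erel :: "'a set set \<Rightarrow> ('a \<times> 'a) set" where
  "erel E = {(x, y). {x, y} \<in> E}"

definition comp :: "'a set set \<Rightarrow> 'a \<Rightarrow> 'a set" where
  "comp E x = {y. (x, y) \<in> (erel E)\<^sup>*}"

definition is_shape :: "'a set \<Rightarrow> 'a set set \<Rightarrow> ('a \<Rightarrow> pt) \<Rightarrow> bool" where
  "is_shape V E pos \<longleftrightarrow> finite V \<and> V \<noteq> {} \<and> inj_on pos V \<and>
     (\<forall>e\<in>E. \<exists>x y. e = {x, y} \<and> x \<noteq> y \<and> x \<in> V \<and> y \<in> V \<and> grid_adj (pos x) (pos y)) \<and>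
     (\<forall>x\<in>V. \<forall>y\<in>V. (x, y) \<in> (erel E)\<^sup>*)"

definition tree_shape :: "'a set \<Rightarrow> 'a set set \<Rightarrow> ('a \<Rightarrow> pt) \<Rightarrow> bool" where
  "tree_shape V E pos \<longleftrightarrow> is_shape V E pos \<and> finite E \<and> card E + 1 = card V"

definition unit_dirs :: "pt set" where
  "unit_dirs = {(1, 0), (-1, 0), (0, 1), (0, -1)}"

text \<open>Operation on u toward u + d is of type (ii) (subdivision) iff u has an edge to the node at u + d.\<close>
definition subdiv :: "'a set set \<Rightarrow> ('a \<Rightarrow> pt) \<Rightarrow> pt \<Rightarrow> 'a \<Rightarrow> bool" where
  "subdiv E pos d u \<longleftrightarrow> (\<exists>v. {u, v} \<in> E \<and> pos v = pos u + d)"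

definition tgt :: "'a set set \<Rightarrow> ('a \<Rightarrow> pt) \<Rightarrow> pt \<Rightarrow> 'a \<Rightarrow> 'a" where
  "tgt E pos d u = (THE v. {u, v} \<in> E \<and> pos v = pos u + d)"

text \<open>b is the endpoint of edge ab farther from the anchor u0: removing the edge separates b from u0.\<close>
definition far_end :: "'a \<Rightarrow> 'a set set \<Rightarrow> 'a \<Rightarrow> 'a \<Rightarrow> bool" where
  "far_end u0 E a b \<longleftrightarrow> u0 \<notin> comp (E - {{a, b}}) b"

text \<open>Part of the tree translated by the operation on u (empty for type (i)).\<close>
definition moved :: "'a \<Rightarrow> 'a set set \<Rightarrow> ('a \<Rightarrow> pt) \<Rightarrow> pt \<Rightarrow> 'a \<Rightarrow> 'a set" where
  "moved u0 E pos d u =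
     (if subdiv E pos d u then
        (let v = tgt E pos d u in
          if far_end u0 E u v then comp (E - {{u, v}}) v else comp (E - {{u, v}}) u)
      else {})"

text \<open>Translation vector contributed by the operation on u.\<close>
definition mvec :: "'a \<Rightarrow> 'a set set \<Rightarrow> ('a \<Rightarrow> pt) \<Rightarrow> pt \<Rightarrow> 'a \<Rightarrow> pt" where
  "mvec u0 E pos d u =
     (if subdiv E pos d u \<and> \<not> far_end u0 E u (tgt E pos d u) then - d else d)"

text \<open>Displacement of an existing node x: sum of the contributions of the operations on its path to u0.\<close>
definition disp :: "'a \<Rightarrow> 'a set set \<Rightarrow> ('a \<Rightarrow> pt) \<Rightarrow> pt \<Rightarrow> 'a set \<Rightarrow> 'a \<Rightarrow> pt" where
  "disp u0 E pos d Ops x = (\<Sum>u\<in>Ops. if x \<in> moved u0 E pos d u then mvec u0 E pos d u else 0)"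

text \<open>Resulting node set, edge set and positions of applying operations on the nodes of Ops
  (all in direction d), the new node created by the operation on u being nw u.\<close>
definition step_V :: "'a set \<Rightarrow> 'a set \<Rightarrow> ('a \<Rightarrow> 'a) \<Rightarrow> 'a set" where
  "step_V V Ops nw = V \<union> nw ` Ops"

definition step_E :: "'a set set \<Rightarrow> ('a \<Rightarrow> pt) \<Rightarrow> pt \<Rightarrow> 'a set \<Rightarrow> ('a \<Rightarrow> 'a) \<Rightarrow> 'a set set" where
  "step_E E pos d Ops nw =
     (E - {{u, tgt E pos d u} | u. u \<in> Ops \<and> subdiv E pos d u})
     \<union> {{u, nw u} | u. u \<in> Ops}
     \<union> {{nw u, tgt E pos d u} | u. u \<in> Ops \<and> subdiv E pos d u}"

definition step_pos :: "'a \<Rightarrow> 'a set \<Rightarrow> 'a set set \<Rightarrow> ('a \<Rightarrow> pt) \<Rightarrow> pt \<Rightarrow> 'a set \<Rightarrow> ('a \<Rightarrow> 'a)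
    \<Rightarrow> 'a \<Rightarrow> pt" where
  "step_pos u0 V E pos d Ops nw x =
     (if x \<in> V then pos x + disp u0 E pos d Ops x
      else if x \<in> nw ` Ops then
        (let u = (THE u. u \<in> Ops \<and> nw u = x) in
          if subdiv E pos d u \<and> \<not> far_end u0 E u (tgt E pos d u)
          then pos (tgt E pos d u) + disp u0 E pos d Ops (tgt E pos d u) - d
          else pos u + disp u0 E pos d Ops u + d)
      else pos x)"

text \<open>Collision-freeness: no two existing nodes meet while moving (linearly, simultaneously)
  and no two nodes end at the same point.\<close>
definition collision_free :: "'a \<Rightarrow> 'a set \<Rightarrow> 'a set set \<Rightarrow> ('a \<Rightarrow> pt) \<Rightarrow> pt \<Rightarrow> 'a set
    \<Rightarrow> ('a \<Rightarrow> 'a) \<Rightarrow> bool" where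
  "collision_free u0 V E pos d Ops nw \<longleftrightarrow>
     inj_on (step_pos u0 V E pos d Ops nw) (step_V V Ops nw) \<and>
     (\<forall>x\<in>V. \<forall>y\<in>V. x \<noteq> y \<longrightarrow> (\<forall>\<tau>::real. 0 \<le> \<tau> \<and> \<tau> \<le> 1 \<longrightarrow>
        (real_of_int (fst (pos x)) + \<tau> * real_of_int (fst (disp u0 E pos d Ops x)),
         real_of_int (snd (pos x)) + \<tau> * real_of_int (snd (disp u0 E pos d Ops x)))
        \<noteq>
        (real_of_int (fst (pos y)) + \<tau> * real_of_int (fst (disp u0 E pos d Ops y)),
         real_of_int (snd (pos y)) + \<tau> * real_of_int (snd (disp u0 E pos d Ops y)))))"

text \<open>A valid time step from (V,E,pos) to (V',E',pos'): direction d, operated nodes Ops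
  (each receiving exactly one operation), fresh new nodes nw u.\<close>
definition growth_step :: "'a \<Rightarrow> 'a set \<Rightarrow> 'a set set \<Rightarrow> ('a \<Rightarrow> pt) \<Rightarrow> pt \<Rightarrow> 'a set \<Rightarrow> ('a \<Rightarrow> 'a)
    \<Rightarrow> 'a set \<Rightarrow> 'a set set \<Rightarrow> ('a \<Rightarrow> pt) \<Rightarrow> bool" where
  "growth_step u0 V E pos d Ops nw V' E' pos' \<longleftrightarrow>
     d \<in> unit_dirs \<and> Ops \<subseteq> V \<and> inj_on nw Ops \<and> nw ` Ops \<inter> V = {} \<and>
     collision_free u0 V E pos d Ops nw \<and>
     V' = step_V V Ops nw \<and> E' = step_E E pos d Ops nw \<and>
     (\<forall>x\<in>V'. pos' x = step_pos u0 V E pos d Ops nw x)"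

text \<open>A growth process: number of steps, shapes at the end of each time step (index 0 = initial),
  and for each step t in 1..tf its direction, set of operated nodes and new-node naming.\<close>
record 'a growth =
  g_tf :: nat
  g_V :: "nat \<Rightarrow> 'a set"
  g_E :: "nat \<Rightarrow> 'a set set"
  g_pos :: "nat \<Rightarrow> 'a \<Rightarrow> pt"
  g_dir :: "nat \<Rightarrow> pt"
  g_ops :: "nat \<Rightarrow> 'a set"
  g_new :: "nat \<Rightarrow> 'a \<Rightarrow> 'a"

text \<open>sigma is a growth process from the single node u0 (the anchor) that grows the shape (V,E,pos)
  (equality of positions up to translation).\<close>
definition grows_from_single :: "'a growth \<Rightarrow> 'a \<Rightarrow> 'a set \<Rightarrow> 'a set set \<Rightarrow> ('a \<Rightarrow> pt) \<Rightarrow> bool" where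
  "grows_from_single \<sigma> u0 V E pos \<longleftrightarrow>
     g_V \<sigma> 0 = {u0} \<and> g_E \<sigma> 0 = {} \<and>
     (\<forall>t\<in>{1..g_tf \<sigma>}. growth_step u0 (g_V \<sigma> (t - 1)) (g_E \<sigma> (t - 1)) (g_pos \<sigma> (t - 1))
         (g_dir \<sigma> t) (g_ops \<sigma> t) (g_new \<sigma> t) (g_V \<sigma> t) (g_E \<sigma> t) (g_pos \<sigma> t)) \<and>
     g_V \<sigma> (g_tf \<sigma>) = V \<and> g_E \<sigma> (g_tf \<sigma>) = E \<and>
     (\<exists>c. \<forall>x\<in>V. g_pos \<sigma> (g_tf \<sigma>) x = pos x + c)"

definition gen_at :: "'a growth \<Rightarrow> nat \<Rightarrow> 'a \<Rightarrow> 'a \<Rightarrow> bool" where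
  "gen_at \<sigma> t u v \<longleftrightarrow> 1 \<le> t \<and> t \<le> g_tf \<sigma> \<and> u \<in> g_ops \<sigma> t \<and> v = g_new \<sigma> t u"

definition gen_rel :: "'a growth \<Rightarrow> ('a \<times> 'a) set" where
  "gen_rel \<sigma> = {(u, v). \<exists>t. gen_at \<sigma> t u v}"

definition gen_chain :: "'a growth \<Rightarrow> 'a \<Rightarrow> 'a \<Rightarrow> bool" where
  "gen_chain \<sigma> u v \<longleftrightarrow> (u, v) \<in> (gen_rel \<sigma>)\<^sup>+"

definition is_path :: "'a set \<Rightarrow> 'a set set \<Rightarrow> 'a list \<Rightarrow> bool" where
  "is_path V E ps \<longleftrightarrow> ps \<noteq> [] \<and> distinct ps \<and> set ps \<subseteq> V \<and>
     (\<forall>i. Suc i < length ps \<longrightarrow> {ps ! i, ps ! Suc i} \<in> E)"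

definition straight_segment :: "'a set \<Rightarrow> 'a set set \<Rightarrow> ('a \<Rightarrow> pt) \<Rightarrow> 'a list \<Rightarrow> bool" where
  "straight_segment V E pos ps \<longleftrightarrow> is_path V E ps \<and>
     ((\<forall>x\<in>set ps. fst (pos x) = fst (pos (hd ps))) \<or> (\<forall>x\<in>set ps. snd (pos x) = snd (pos (hd ps))))"

definition on_common_segment :: "'a set \<Rightarrow> 'a set set \<Rightarrow> ('a \<Rightarrow> pt) \<Rightarrow> 'a set \<Rightarrow> bool" where
  "on_common_segment V E pos A \<longleftrightarrow> (\<exists>ps. straight_segment V E pos ps \<and> A \<subseteq> set ps)"

definition maps_at :: "'a growth \<Rightarrow> nat \<Rightarrow> 'a \<Rightarrow> 'a \<Rightarrow> bool" where
  "maps_at \<sigma> t u v \<longleftrightarrow> gen_at \<sigma> t u v \<or>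
     (\<exists>u'. gen_chain \<sigma> u u' \<and> gen_at \<sigma> t u' v \<and>
        on_common_segment (g_V \<sigma> t) (g_E \<sigma> t) (g_pos \<sigma> t) {u, u', v})"

definition maps_to :: "'a growth \<Rightarrow> 'a \<Rightarrow> 'a \<Rightarrow> bool" where
  "maps_to \<sigma> u v \<longleftrightarrow> (\<exists>t\<ge>1. maps_at \<sigma> t u v)"

definition root_leaf_path :: "'a set \<Rightarrow> 'a set set \<Rightarrow> 'a \<Rightarrow> 'a list \<Rightarrow> bool" where
  "root_leaf_path V E u0 ps \<longleftrightarrow> is_path V E ps \<and> hd ps = u0 \<and>
     (\<forall>y. {last ps, y} \<in> E \<longrightarrow> y \<in> set ps)"

definition perp :: "pt \<Rightarrow> pt \<Rightarrow> bool" where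
  "perp a b \<longleftrightarrow> fst a * fst b + snd a * snd b = 0"

definition is_turning :: "('a \<Rightarrow> pt) \<Rightarrow> 'a list \<Rightarrow> nat \<Rightarrow> bool" where
  "is_turning pos ps i \<longleftrightarrow> i < length ps \<and>
     (i = 0 \<or> i = length ps - 1 \<or>
      perp (pos (ps ! i) - pos (ps ! (i - 1))) (pos (ps ! (i + 1)) - pos (ps ! i)))"

definition turning_points :: "('a \<Rightarrow> pt) \<Rightarrow> 'a list \<Rightarrow> 'a list" where
  "turning_points pos ps = map (\<lambda>i. ps ! i) (filter (is_turning pos ps) [0..<length ps])"

end

theory Submission
  imports Defs
begin

text \<open>
  Let u and v be consecutive turning points of the path, so that the path runs straight from u to v
  and enters u by a right angle.  Restricting the path to the nodes present at an earlier time step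
  keeps these properties, because a growth step either preserves the direction of an old edge or
  subdivides it at its midpoint.  Hence u already exists when v is created at step s: at the step
  creating u it would otherwise be the midpoint of a straight subdivision, contradicting the right
  angle.  The predecessor of v on the path at step s is either its generator g, or the far end of the
  edge subdivided by g; in both cases the path at step s - 1 runs straight from u to g (in the
  second case because the subdivided edge is a bridge).  By induction on time u generates g through
  a chain, and u, g, v lie on a common straight segment after step s.
\<close>

abbreviation walk :: "'a set set \<Rightarrow> 'a list \<Rightarrow> bool" where
  "walk F \<equiv> successively (\<lambda>x y. {x, y} \<in> F)"

abbreviation const_step :: "('a \<Rightarrow> pt) \<Rightarrow> pt \<Rightarrow> 'a list \<Rightarrow> bool" where
  "const_step P w \<equiv> successively (\<lambda>x y. P y - P x = w)"

lemma is_path_iff_walk: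
  "is_path V E ps \<longleftrightarrow> ps \<noteq> [] \<and> distinct ps \<and> set ps \<subseteq> V \<and> walk E ps"
  unfolding is_path_def successively_conv_nth by auto

lemma is_path_prefix: "is_path V E (xs @ ys) \<Longrightarrow> xs \<noteq> [] \<Longrightarrow> is_path V E xs"
  unfolding is_path_iff_walk by (auto simp: successively_append_iff)

lemma is_path_suffix: "is_path V E (xs @ ys) \<Longrightarrow> ys \<noteq> [] \<Longrightarrow> is_path V E ys"
  unfolding is_path_iff_walk by (auto simp: successively_append_iff)

lemma comp_refl: "a \<in> comp F a"
  by (simp add: comp_def)

lemma comp_edge: "x \<in> comp F a \<Longrightarrow> {x, y} \<in> F \<Longrightarrow> y \<in> comp F a"
  by (auto simp: comp_def erel_def intro: rtrancl_into_rtrancl)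

lemma comp_edge': "y \<in> comp F a \<Longrightarrow> {x, y} \<in> F \<Longrightarrow> x \<in> comp F a"
  by (metis comp_edge insert_commute)

lemma comp_sym: "b \<in> comp F a \<Longrightarrow> a \<in> comp F b"
proof -
  have "(erel F)\<inverse> = erel F"
    by (auto simp: erel_def insert_commute)
  then show "b \<in> comp F a \<Longrightarrow> a \<in> comp F b"
    unfolding comp_def by (metis mem_Collect_eq rtrancl_converseI)
qed

lemma comp_trans: "c \<in> comp F b \<Longrightarrow> b \<in> comp F a \<Longrightarrow> c \<in> comp F a"
  by (auto simp: comp_def)

lemma walk_last_in_comp: "walk F L \<Longrightarrow> L \<noteq> [] \<Longrightarrow> last L \<in> comp F (hd L)"
proof (induction L rule: induct_list012)
  case (3 x y zs)
  then have "last (y # zs) \<in> comp F y" "y \<in> comp F x"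
    by (auto intro: comp_edge[OF comp_refl])
  then show ?case
    using comp_trans by fastforce
qed (auto simp: comp_refl)

lemma walk_avoids_end_edge:
  assumes "walk F L" "distinct L" "3 \<le> length L"
  shows "walk (F - {{hd L, last L}}) L"
  unfolding successively_conv_nth
proof (intro allI impI)
  fix i assume i: "Suc i < length L"
  let ?n = "length L"
  have "L \<noteq> []"
    using assms(3) by auto
  then have ends: "hd L = L ! 0" "last L = L ! (?n - 1)"
    by (simp_all add: hd_conv_nth last_conv_nth)
  have "{L ! i, L ! Suc i} \<noteq> {L ! 0, L ! (?n - 1)}"
  proof
    assume "{L ! i, L ! Suc i} = {L ! 0, L ! (?n - 1)}"
    then have "(L ! i = L ! 0 \<and> L ! Suc i = L ! (?n - 1)) \<or> (L ! i = L ! (?n - 1) \<and> L ! Suc i = L ! 0)"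
      by (auto simp: doubleton_eq_iff)
    moreover have "i < ?n" "0 < ?n" "?n - 1 < ?n"
      using i by auto
    ultimately have "(i = 0 \<and> Suc i = ?n - 1) \<or> (i = ?n - 1 \<and> Suc i = 0)"
      using i nth_eq_iff_index_eq[OF assms(2)] by metis
    then show False
      using i assms(3) by auto
  qed
  then show "{L ! i, L ! Suc i} \<in> F - {{hd L, last L}}"
    using assms(1) i ends by (auto simp: successively_conv_nth)
qed

lemma walk_bridge_last_step:
  assumes bridge: "y \<notin> comp (F - {{x, y}}) x"
    and L: "walk F L" "distinct L" "x \<in> set L" "last L = y" "x \<noteq> y"
  shows "last (butlast L) = x"
proof -
  obtain A B where AB: "L = A @ x # B"
    using split_list[OF L(3)] by blast
  have "B \<noteq> []" "last B = y"
    using AB L(4,5) by auto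
  moreover have "length (x # B) < 3"
  proof (rule ccontr)
    assume "\<not> length (x # B) < 3"
    then have "3 \<le> length (x # B)" by simp
    moreover have "walk F (x # B)" "distinct (x # B)"
      using L(1,2) AB by (auto simp: successively_append_iff)
    ultimately have "walk (F - {{x, y}}) (x # B)"
      using walk_avoids_end_edge \<open>last B = y\<close> \<open>B \<noteq> []\<close> by fastforce
    then have "y \<in> comp (F - {{x, y}}) x"
      using walk_last_in_comp \<open>last B = y\<close> \<open>B \<noteq> []\<close> by fastforce
    then show False
      using bridge by contradiction
  qed
  ultimately have "B = [y]"
    by (cases B) auto
  then show ?thesis
    using AB by (simp add: butlast_append)
qed

lemma hd_filter: "xs \<noteq> [] \<Longrightarrow> P (hd xs) \<Longrightarrow> hd (filter P xs) = hd xs"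
  by (cases xs) auto

lemma last_filter: "xs \<noteq> [] \<Longrightarrow> P (last xs) \<Longrightarrow> last (filter P xs) = last xs"
  by (induction xs rule: rev_induct) auto

lemma filter_nonempty: "xs \<noteq> [] \<Longrightarrow> P (hd xs) \<Longrightarrow> filter P xs \<noteq> []"
  by (cases xs) auto

lemma successively_filter:
  assumes "successively R xs" "distinct xs" "successively (\<lambda>x y. P x \<or> P y) xs"
    and "xs \<noteq> []" "P (hd xs)" "P (last xs)"
    and direct: "\<And>x y. R x y \<Longrightarrow> P x \<Longrightarrow> P y \<Longrightarrow> Q x y"
    and bypass: "\<And>x y z. R x y \<Longrightarrow> R y z \<Longrightarrow> P x \<Longrightarrow> \<not> P y \<Longrightarrow> P z \<Longrightarrow> x \<noteq> z \<Longrightarrow> Q x z"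
  shows "successively Q (filter P xs)"
  using assms(1-6)
proof (induction xs rule: induct_list012)
  case (3 x y zs)
  show ?case
  proof (cases "P y")
    case True
    then show ?thesis
      using 3 direct by (auto simp: successively_Cons)
  next
    case False
    then obtain z zs' where zs: "zs = z # zs'"
      using "3.prems"(6) by (cases zs) auto
    then have "P z"
      using "3.prems"(3) False by simp
    moreover have "successively Q (filter P zs)"
      using "3.IH"(1) "3.prems" zs \<open>P z\<close> by auto
    ultimately show ?thesis
      using 3 False zs bypass[of x y z] by (auto simp: successively_Cons)
  qed
qed auto

lemma abs_sum_one_iff: "\<bar>x\<bar> + \<bar>y\<bar> = (1::int) \<longleftrightarrow> (x, y) \<in> unit_dirs"
  unfolding unit_dirs_def by auto

lemma grid_adj_sym: "grid_adj p q \<Longrightarrow> grid_adj q p"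
  by (simp add: grid_adj_def abs_minus_commute)


lemma grid_adj_iff_unit_dirs: "grid_adj p q \<longleftrightarrow> q - p \<in> unit_dirs"
  using abs_sum_one_iff[of "fst q - fst p" "snd q - snd p"]
  unfolding grid_adj_def by (cases p, cases q) (simp add: abs_minus_commute)

lemma unit_dirs_nonzero: "w \<in> unit_dirs \<Longrightarrow> w \<noteq> 0"
  by (auto simp: unit_dirs_def zero_prod_def)

lemma unit_dirs_axis: "w \<in> unit_dirs \<Longrightarrow> fst w = 0 \<or> snd w = 0"
  by (auto simp: unit_dirs_def)

lemma unit_dirs_not_perp: "u \<in> unit_dirs \<Longrightarrow> v \<in> unit_dirs \<Longrightarrow> \<not> perp u v \<Longrightarrow> u = v \<or> u = - v"
  unfolding unit_dirs_def perp_def by auto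

lemma perp_commute: "perp a b \<longleftrightarrow> perp b a"
  by (simp add: perp_def mult.commute)

lemma perp_self_iff: "perp w w \<longleftrightarrow> w = (0::pt)"
  unfolding perp_def by (cases w) (simp add: zero_prod_def)

lemma const_step_coordinate:
  fixes f :: "pt \<Rightarrow> int"
  assumes "const_step P w L" "f w = 0" "\<And>a b. f (a - b) = f a - f b" "x \<in> set L"
  shows "f (P x) = f (P (hd L))"
  using assms(1,4)
proof (induction L rule: induct_list012)
  case (3 a b r)
  have "f (P b) = f (P a)"
    using "3.prems"(1) assms(2) assms(3)[of "P b" "P a"] by simp
  then show ?case
    using 3 by auto
qed auto

lemma const_step_straight:
  assumes "const_step P w L" "w \<in> unit_dirs"
  shows "(\<forall>x\<in>set L. fst (P x) = fst (P (hd L))) \<or> (\<forall>x\<in>set L. snd (P x) = snd (P (hd L)))"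
  using unit_dirs_axis[OF assms(2)] const_step_coordinate[OF assms(1), where f = fst]
    const_step_coordinate[OF assms(1), where f = snd] by auto

lemma const_step_translate:
  assumes "\<forall>x\<in>set L. Q x = P x + c"
  shows "const_step Q w L \<longleftrightarrow> const_step P w L"
  using assms by (induction L rule: induct_list012) auto

subsection \<open>A single growth step\<close>

definition embedded :: "'a set \<Rightarrow> 'a set set \<Rightarrow> ('a \<Rightarrow> pt) \<Rightarrow> bool" where
  "embedded V E pos \<longleftrightarrow> finite V \<and> (\<forall>e\<in>E. e \<subseteq> V) \<and> inj_on pos V"

locale embedded_growth_step =
  fixes u0 :: 'a and V :: "'a set" and E :: "'a set set" and pos :: "'a \<Rightarrow> pt" and d :: pt
    and Ops :: "'a set" and nw :: "'a \<Rightarrow> 'a" and V' :: "'a set" and E' :: "'a set set"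
    and pos' :: "'a \<Rightarrow> pt"
  assumes step: "growth_step u0 V E pos d Ops nw V' E' pos'"
    and embedded: "embedded V E pos"
begin

abbreviation "sp \<equiv> step_pos u0 V E pos d Ops nw"
abbreviation "D \<equiv> disp u0 E pos d Ops"
abbreviation "mv \<equiv> moved u0 E pos d"
abbreviation "mvc \<equiv> mvec u0 E pos d"
abbreviation "sd \<equiv> subdiv E pos d"
abbreviation "tg \<equiv> tgt E pos d"

lemma d_unit: "d \<in> unit_dirs" and Ops_subset: "Ops \<subseteq> V" and inj_nw: "inj_on nw Ops"
  and nw_notin: "nw ` Ops \<inter> V = {}" and V'_eq: "V' = V \<union> nw ` Ops"
  and E'_eq: "E' = step_E E pos d Ops nw" and pos'_eq: "\<And>x. x \<in> V' \<Longrightarrow> pos' x = sp x"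
  and inj_sp: "inj_on sp V'"
  using step unfolding growth_step_def collision_free_def step_V_def by auto

lemma d_nonzero: "d \<noteq> 0" and d_ne_uminus: "d \<noteq> - d"
  using d_unit by (auto simp: unit_dirs_def zero_prod_def)

lemma finite_Ops: "finite Ops"
  using embedded Ops_subset finite_subset by (auto simp: embedded_def)

lemma edge_subset: "e \<in> E \<Longrightarrow> e \<subseteq> V"
  using embedded by (auto simp: embedded_def)

lemma new_notin_V: "u \<in> Ops \<Longrightarrow> nw u \<notin> V"
  using nw_notin by auto

lemma tgt: assumes "sd u" shows "{u, tg u} \<in> E" "pos (tg u) = pos u + d"
proof -
  from assms obtain v where v: "{u, v} \<in> E" "pos v = pos u + d"
    by (auto simp: subdiv_def)
  have "v' = v" if "{u, v'} \<in> E \<and> pos v' = pos u + d" for v'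
  proof -
    have "v \<in> V" "v' \<in> V"
      using that v(1) edge_subset by blast+
    moreover have "pos v' = pos v"
      using that v(2) by simp
    ultimately show ?thesis
      using embedded unfolding embedded_def by (metis inj_onD)
  qed
  then have "tg u = v"
    unfolding tgt_def using v by blast
  then show "{u, tg u} \<in> E" "pos (tg u) = pos u + d"
    using v by auto
qed

lemma tgt_in_V: "sd u \<Longrightarrow> tg u \<in> V"
  using tgt edge_subset by blast

lemma tgt_ne: "sd u \<Longrightarrow> tg u \<noteq> u"
  using tgt(2) d_nonzero by fastforce

lemma subdivided_edges_distinct:
  assumes "sd u" "sd g" "{u, tg u} = {g, tg g}" shows "u = g"
proof (rule ccontr)
  assume "u \<noteq> g"
  with assms(3) have "u = tg g" "tg u = g"
    by (auto simp: doubleton_eq_iff)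
  with tgt(2)[OF assms(1)] tgt(2)[OF assms(2)] have "pos g = pos g + (d + d)"
    by (simp add: add.assoc)
  then show False
    using d_ne_uminus by (simp add: add_eq_0_iff)
qed

lemma moved_edge_iff:
  assumes "{x, y} \<in> E" "sd u \<longrightarrow> {x, y} \<noteq> {u, tg u}"
  shows "x \<in> mv u \<longleftrightarrow> y \<in> mv u"
proof (cases "sd u")
  case True
  then have e: "{x, y} \<in> E - {{u, tg u}}"
    using assms by auto
  show ?thesis
    using True unfolding moved_def Let_def by (auto intro: comp_edge[OF _ e] comp_edge'[OF _ e])
qed (simp add: moved_def)

lemma disp_edge:
  "{x, y} \<in> E \<Longrightarrow> \<forall>u\<in>Ops. sd u \<longrightarrow> {x, y} \<noteq> {u, tg u} \<Longrightarrow> D x = D y"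
  unfolding disp_def by (rule sum.cong) (auto dest: moved_edge_iff)

lemma disp_remove:
  "g \<in> Ops \<Longrightarrow> D x = (if x \<in> mv g then mvc g else 0) + (\<Sum>u\<in>Ops - {g}. if x \<in> mv u then mvc u else 0)"
  unfolding disp_def using finite_Ops by (simp add: sum.remove)

lemma disp_others_tgt:
  assumes "g \<in> Ops" "sd g"
  shows "(\<Sum>u\<in>Ops - {g}. if g \<in> mv u then mvc u else 0)
       = (\<Sum>u\<in>Ops - {g}. if tg g \<in> mv u then mvc u else 0)"
proof (rule sum.cong)
  fix u assume "u \<in> Ops - {g}"
  then have "sd u \<longrightarrow> {g, tg g} \<noteq> {u, tg u}"
    using subdivided_edges_distinct assms by blast
  then show "(if g \<in> mv u then mvc u else 0) = (if tg g \<in> mv u then mvc u else 0)"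
    using moved_edge_iff[OF tgt(1)[OF assms(2)]] by auto
qed simp

lemma the_new: "g \<in> Ops \<Longrightarrow> (THE u. u \<in> Ops \<and> nw u = nw g) = g"
  using inj_nw by (auto dest: inj_onD)

lemma sp_old: "x \<in> V \<Longrightarrow> sp x = pos x + D x"
  by (simp add: step_pos_def)

lemma sp_new: "g \<in> Ops \<Longrightarrow> sp (nw g) = (if sd g \<and> \<not> far_end u0 E g (tg g)
   then pos (tg g) + D (tg g) - d else pos g + D g + d)"
  using new_notin_V the_new by (simp add: step_pos_def Let_def)

text \<open>If the subdivided edge were not a bridge, both of its ends would be translated together and
  the new node would land on one of them.\<close>
lemma subdivided_edge_bridge:
  assumes g: "g \<in> Ops" "sd g" shows "tg g \<notin> comp (E - {{g, tg g}}) g"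
proof
  let ?v = "tg g"
  assume a: "?v \<in> comp (E - {{g, ?v}}) g"
  then have "g \<in> mv g" "?v \<in> mv g"
    using g comp_sym comp_refl unfolding moved_def Let_def by auto
  then have same: "D g = D ?v"
    using disp_remove[OF g(1), of g] disp_remove[OF g(1), of ?v] disp_others_tgt[OF g] by simp
  have in_V': "nw g \<in> V'" "g \<in> V'" "?v \<in> V'"
    using g V'_eq Ops_subset tgt_in_V by auto
  have "nw g \<noteq> g" "nw g \<noteq> ?v"
    using new_notin_V[OF g(1)] g(1) Ops_subset tgt_in_V[OF g(2)] by auto
  moreover have "sp (nw g) = sp ?v \<or> sp (nw g) = sp g"
    using sp_new[OF g(1)] sp_old tgt_in_V[OF g(2)] tgt(2)[OF g(2)] same g(1) Ops_subset
    by (auto simp: algebra_simps)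
  ultimately show False
    using inj_sp in_V' by (metis inj_onD)
qed

lemma sp_new_offset: assumes g: "g \<in> Ops" shows "sp (nw g) - sp g = d"
proof (cases "sd g \<and> \<not> far_end u0 E g (tg g)")
  case True
  let ?R = "\<Sum>u\<in>Ops - {g}. if g \<in> mv u then mvc u else 0"
  have "g \<in> mv g" "tg g \<notin> mv g"
    using True subdivided_edge_bridge[OF g] comp_refl unfolding moved_def Let_def by auto
  then have "D g = - d + ?R" "D (tg g) = ?R"
    using disp_remove[OF g, of g] disp_remove[OF g, of "tg g"] disp_others_tgt[OF g] True
    by (auto simp: mvec_def)
  then show ?thesis
    using True sp_new[OF g] sp_old g Ops_subset tgt(2)[of g] by (auto simp: algebra_simps)
next
  case False
  then show ?thesis
    using sp_new[OF g] sp_old g Ops_subset by (auto simp: algebra_simps)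
qed

lemma sp_tgt_offset: assumes g: "g \<in> Ops" "sd g" shows "sp (tg g) - sp (nw g) = d"
proof -
  let ?v = "tg g"
  let ?R = "\<Sum>u\<in>Ops - {g}. if g \<in> mv u then mvc u else 0"
  show ?thesis
  proof (cases "far_end u0 E g ?v")
    case True
    have "g \<notin> mv g" "?v \<in> mv g"
      using True subdivided_edge_bridge[OF g] comp_refl comp_sym[of g _ ?v] g
      unfolding moved_def Let_def by auto
    then have "D g = ?R" "D ?v = d + ?R"
      using disp_remove[OF g(1), of g] disp_remove[OF g(1), of ?v] disp_others_tgt[OF g] True g
      by (auto simp: mvec_def)
    then show ?thesis
      using True sp_new[OF g(1)] sp_old g Ops_subset tgt(2)[OF g(2)] tgt_in_V[OF g(2)]
      by (auto simp: algebra_simps)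
  next
    case False
    have "g \<in> mv g" "?v \<notin> mv g"
      using False subdivided_edge_bridge[OF g] comp_refl g unfolding moved_def Let_def by auto
    then have "D ?v = ?R"
      using disp_remove[OF g(1), of ?v] disp_others_tgt[OF g] by auto
    then show ?thesis
      using False sp_new[OF g(1)] sp_old g tgt_in_V[OF g(2)] by (auto simp: algebra_simps)
  qed
qed

lemma pos'_new_offset: "g \<in> Ops \<Longrightarrow> pos' (nw g) - pos' g = d"
  using sp_new_offset pos'_eq V'_eq Ops_subset by auto

lemma pos'_tgt_offset: "g \<in> Ops \<Longrightarrow> sd g \<Longrightarrow> pos' (tg g) - pos' (nw g) = d"
  using sp_tgt_offset pos'_eq V'_eq tgt_in_V by auto

lemma E'_cases:
  assumes "e \<in> E'"
  shows "(e \<in> E \<and> (\<forall>u\<in>Ops. sd u \<longrightarrow> e \<noteq> {u, tg u}))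
    \<or> (\<exists>u\<in>Ops. e = {u, nw u}) \<or> (\<exists>u\<in>Ops. sd u \<and> e = {nw u, tg u})"
  using assms unfolding E'_eq step_E_def by blast

lemma new_edges: "g \<in> Ops \<Longrightarrow> {g, nw g} \<in> E'" "g \<in> Ops \<Longrightarrow> sd g \<Longrightarrow> {nw g, tg g} \<in> E'"
  unfolding E'_eq step_E_def by blast+

lemma edge'_subset: "e \<in> E' \<Longrightarrow> e \<subseteq> V'"
  using E'_cases edge_subset V'_eq Ops_subset tgt_in_V by blast

lemma edge'_in_V': "{x, y} \<in> E' \<Longrightarrow> y \<in> V'"
  using edge'_subset by blast

lemma embedded': "embedded V' E' pos'"
proof -
  have "inj_on pos' V'"
    using inj_sp inj_on_cong[of V' pos' sp] pos'_eq by simp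
  then show ?thesis
    using embedded V'_eq finite_Ops edge'_subset by (auto simp: embedded_def)
qed

lemma new_node_cases: assumes "y \<in> V'" "y \<notin> V" obtains g where "g \<in> Ops" "y = nw g"
  using assms V'_eq by blast

lemma new_node_neighbour:
  assumes g: "g \<in> Ops" and e: "{x, nw g} \<in> E'" shows "x = g \<or> (sd g \<and> x = tg g)"
proof -
  have nw: "nw g \<notin> V" "\<And>u. u \<in> Ops \<Longrightarrow> nw g = nw u \<Longrightarrow> u = g"
    using new_notin_V g inj_nw by (auto dest: inj_onD)
  consider "{x, nw g} \<in> E" | u where "u \<in> Ops" "{x, nw g} = {u, nw u}"
    | u where "u \<in> Ops" "sd u" "{x, nw g} = {nw u, tg u}"
    using E'_cases[OF e] by blast
  then show ?thesis
  proof cases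
    case 1
    then show ?thesis
      using edge_subset nw by blast
  next
    case (2 u)
    then have "u \<in> V"
      using Ops_subset by blast
    then show ?thesis
      using 2 nw by (auto simp: doubleton_eq_iff)
  next
    case (3 u)
    then have "tg u \<in> V"
      using tgt_in_V by blast
    then show ?thesis
      using 3 nw by (auto simp: doubleton_eq_iff)
  qed
qed

lemma old_edge:
  assumes "{x, y} \<in> E'" "x \<in> V" "y \<in> V"
  shows "{x, y} \<in> E" "pos' y - pos' x = pos y - pos x"
proof -
  have "\<forall>u\<in>Ops. nw u \<notin> {x, y}"
    using assms new_notin_V by auto
  then have e: "{x, y} \<in> E" "\<forall>u\<in>Ops. sd u \<longrightarrow> {x, y} \<noteq> {u, tg u}"
    using E'_cases[OF assms(1)] by auto
  then show "{x, y} \<in> E"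
    by simp
  have "D x = D y"
    using disp_edge e by blast
  then show "pos' y - pos' x = pos y - pos x"
    using pos'_eq V'_eq assms sp_old by (simp add: algebra_simps)
qed

lemma new_node_between:
  assumes y: "y \<in> V'" "y \<notin> V" and e: "{x, y} \<in> E'" "{y, z} \<in> E'" and "x \<noteq> z"
  shows "x \<in> V" "z \<in> V" "{x, z} \<in> E"
    "pos' y - pos' x = pos z - pos x" "pos' z - pos' y = pos z - pos x"
proof -
  obtain g where g: "g \<in> Ops" "y = nw g"
    using new_node_cases y by blast
  have "x = g \<or> (sd g \<and> x = tg g)" "z = g \<or> (sd g \<and> z = tg g)"
    using new_node_neighbour[OF g(1)] e g by (auto simp: insert_commute)
  with \<open>x \<noteq> z\<close> have sdg: "sd g" and xz: "(x = g \<and> z = tg g) \<or> (x = tg g \<and> z = g)"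
    by auto
  show "x \<in> V" "z \<in> V"
    using xz g Ops_subset tgt_in_V sdg by auto
  show "{x, z} \<in> E"
    using xz tgt(1)[OF sdg] by (auto simp: insert_commute)
  show "pos' y - pos' x = pos z - pos x" "pos' z - pos' y = pos z - pos x"
    using xz pos'_new_offset pos'_tgt_offset g sdg tgt(2)[OF sdg] by (auto simp: algebra_simps)
qed

lemma walk_no_adjacent_new:
  assumes "walk E' L"
  shows "successively (\<lambda>x y. x \<in> V \<or> y \<in> V) L"
proof (rule successively_mono[OF assms])
  fix x y assume e: "{x, y} \<in> E'"
  show "x \<in> V \<or> y \<in> V"
  proof (rule ccontr)
    assume "\<not> (x \<in> V \<or> y \<in> V)"
    moreover obtain g where "g \<in> Ops" "y = nw g" if "y \<notin> V"
      using new_node_cases edge'_in_V'[OF e] by blast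
    ultimately show False
      using new_node_neighbour e Ops_subset tgt_in_V by blast
  qed
qed

abbreviation old :: "'a list \<Rightarrow> 'a list" where
  "old \<equiv> filter (\<lambda>x. x \<in> V)"

lemma walk_old:
  assumes "walk E' L" "distinct L" "set L \<subseteq> V'" "L \<noteq> []" "hd L \<in> V" "last L \<in> V"
  shows "walk E (old L)"
proof (rule successively_filter[OF assms(1,2) walk_no_adjacent_new[OF assms(1)] assms(4-6)])
  show "{x, y} \<in> E" if "{x, y} \<in> E'" "x \<in> V" "y \<in> V" for x y
    using old_edge that by blast
  show "{x, z} \<in> E" if "{x, y} \<in> E'" "{y, z} \<in> E'" "x \<in> V" "y \<notin> V" "z \<in> V" "x \<noteq> z"
    for x y z
    using new_node_between(3)[OF edge'_in_V' that(4,1,2,6)] that(1) .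
qed

lemma const_step_old:
  assumes "walk E' L" "distinct L" "set L \<subseteq> V'" "L \<noteq> []" "hd L \<in> V" "last L \<in> V"
    and "const_step pos' w L"
  shows "const_step pos w (old L)"
proof -
  have "successively (\<lambda>x y. {x, y} \<in> E' \<and> pos' y - pos' x = w) L"
    using assms(1,7) by (simp add: successively_conv_nth)
  then show ?thesis
  proof (rule successively_filter[OF _ assms(2) walk_no_adjacent_new[OF assms(1)] assms(4-6)])
    show "pos y - pos x = w" if "{x, y} \<in> E' \<and> pos' y - pos' x = w" "x \<in> V" "y \<in> V" for x y
      using old_edge that by metis
    show "pos z - pos x = w"
      if "{x, y} \<in> E' \<and> pos' y - pos' x = w" "{y, z} \<in> E' \<and> pos' z - pos' y = w"
        "x \<in> V" "y \<notin> V" "z \<in> V" "x \<noteq> z" for x y z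
      using new_node_between(4)[OF edge'_in_V' that(4)] that by metis
  qed
qed

lemma last_step_old:
  assumes "walk E' (L @ [c])" "distinct (L @ [c])" "set (L @ [c]) \<subseteq> V'"
    and "L \<noteq> []" "hd L \<in> V" "c \<in> V"
  shows "old L \<noteq> [] \<and> pos c - pos (last (old L)) = pos' c - pos' (last L)"
proof -
  obtain L0 y where L: "L = L0 @ [y]"
    using assms(4) rev_exhaust by blast
  have yc: "{y, c} \<in> E'"
    using assms(1) L by (simp add: successively_append_iff)
  show ?thesis
  proof (cases "y \<in> V")
    case True
    then show ?thesis
      using old_edge[OF yc True assms(6)] L by simp
  next
    case False
    then obtain L1 x where L0: "L0 = L1 @ [x]"
      using L assms(5) by (cases L0 rule: rev_cases) auto
    have "{x, y} \<in> E'" "x \<noteq> c" "y \<in> V'"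
      using assms(1-3) L L0 by (auto simp: successively_append_iff)
    then show ?thesis
      using new_node_between[OF _ False _ yc] L L0 False by simp
  qed
qed

end

subsection \<open>Growth processes\<close>

lemma maps_to_gen_chain: "maps_to \<sigma> u v \<Longrightarrow> gen_chain \<sigma> u v"
  unfolding maps_to_def maps_at_def gen_chain_def gen_rel_def
  by (auto intro: trancl_into_trancl)

locale growth_process =
  fixes \<sigma> :: "'a growth" and u0 :: 'a
  assumes initial_V: "g_V \<sigma> 0 = {u0}" and initial_E: "g_E \<sigma> 0 = {}"
    and steps: "\<And>t. t \<in> {1..g_tf \<sigma>} \<Longrightarrow> growth_step u0 (g_V \<sigma> (t - 1)) (g_E \<sigma> (t - 1))
      (g_pos \<sigma> (t - 1)) (g_dir \<sigma> t) (g_ops \<sigma> t) (g_new \<sigma> t) (g_V \<sigma> t) (g_E \<sigma> t) (g_pos \<sigma> t)"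
begin

abbreviation "VV \<equiv> g_V \<sigma>"
abbreviation "EE \<equiv> g_E \<sigma>"
abbreviation "PP \<equiv> g_pos \<sigma>"
abbreviation "tf \<equiv> g_tf \<sigma>"

abbreviation present :: "nat \<Rightarrow> 'a list \<Rightarrow> 'a list" where
  "present t \<equiv> filter (\<lambda>x. x \<in> VV t)"

lemma embedded_at: "t \<le> tf \<Longrightarrow> embedded (VV t) (EE t) (PP t)"
proof (induction t)
  case 0
  then show ?case
    using initial_V initial_E by (simp add: embedded_def)
next
  case (Suc t)
  then interpret embedded_growth_step u0 "VV t" "EE t" "PP t" "g_dir \<sigma> (Suc t)" "g_ops \<sigma> (Suc t)"
    "g_new \<sigma> (Suc t)" "VV (Suc t)" "EE (Suc t)" "PP (Suc t)"
    using steps[of "Suc t"] by unfold_locales auto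
  show ?case
    by (rule embedded')
qed

lemma step_at: "1 \<le> t \<Longrightarrow> t \<le> tf \<Longrightarrow> embedded_growth_step u0 (VV (t - 1)) (EE (t - 1)) (PP (t - 1))
    (g_dir \<sigma> t) (g_ops \<sigma> t) (g_new \<sigma> t) (VV t) (EE t) (PP t)"
  using steps[of t] embedded_at[of "t - 1"] by unfold_locales auto

lemma V_mono: "t' \<le> t \<Longrightarrow> t \<le> tf \<Longrightarrow> VV t' \<subseteq> VV t"
proof (induction t rule: dec_induct)
  case (step n)
  then have "VV n \<subseteq> VV (Suc n)"
    using embedded_growth_step.V'_eq[OF step_at[of "Suc n"]] by auto
  then show ?case
    using step by simp
qed simp

lemma anchor_in_V: "t \<le> tf \<Longrightarrow> u0 \<in> VV t"
  using V_mono[of 0 t] initial_V by auto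

definition run_at :: "nat \<Rightarrow> 'a list \<Rightarrow> 'a list \<Rightarrow> pt \<Rightarrow> bool" where
  "run_at t pre seg w \<longleftrightarrow> is_path (VV t) (EE t) (pre @ seg) \<and> hd (pre @ seg) = u0 \<and> seg \<noteq> [] \<and>
     const_step (PP t) w seg \<and> (pre \<noteq> [] \<longrightarrow> perp (PP t (hd seg) - PP t (last pre)) w)"

lemma run_at_filter_step:
  assumes t: "1 \<le> t" "t \<le> tf" and run: "run_at t pre seg w"
    and ends: "hd seg \<in> VV (t - 1)" "last seg \<in> VV (t - 1)"
  shows "run_at (t - 1) (present (t - 1) pre) (present (t - 1) seg) w"
proof -
  interpret G: embedded_growth_step u0 "VV (t - 1)" "EE (t - 1)" "PP (t - 1)" "g_dir \<sigma> t"
    "g_ops \<sigma> t" "g_new \<sigma> t" "VV t" "EE t" "PP t"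
    using step_at t by simp
  have path: "walk (EE t) (pre @ seg)" "distinct (pre @ seg)" "set (pre @ seg) \<subseteq> VV t"
    and hd_u0: "hd (pre @ seg) = u0" and seg: "seg \<noteq> []" "const_step (PP t) w seg"
    using run by (auto simp: run_at_def is_path_iff_walk)
  have u0: "u0 \<in> VV (t - 1)"
    using anchor_in_V t by simp
  have "walk (EE (t - 1)) (present (t - 1) (pre @ seg))"
    using G.walk_old[OF path] seg ends hd_u0 u0 by simp
  moreover have "hd (present (t - 1) (pre @ seg)) = u0"
    using hd_filter[of "pre @ seg"] seg hd_u0 u0 by simp
  moreover have "present (t - 1) seg \<noteq> []"
    using filter_nonempty[OF seg(1)] ends by simp
  moreover have "const_step (PP (t - 1)) w (present (t - 1) seg)"
    using G.const_step_old[of seg] path seg ends by (auto simp: successively_append_iff)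
  moreover have "perp (PP (t - 1) (hd seg) - PP (t - 1) (last (present (t - 1) pre))) w"
    if "present (t - 1) pre \<noteq> []"
  proof -
    have pre: "pre \<noteq> []"
      using that by auto
    then have "hd pre \<in> VV (t - 1)"
      using hd_u0 u0 by simp
    have split: "pre @ seg = (pre @ [hd seg]) @ tl seg"
      using seg by simp
    have "walk (EE t) (pre @ [hd seg])"
      using path(1) split by (metis successively_append_iff)
    moreover have "distinct (pre @ [hd seg])"
      using path(2) split by (metis distinct_append)
    moreover have "set (pre @ [hd seg]) \<subseteq> VV t"
      using path(3) split by (metis set_append le_sup_iff)
    ultimately show ?thesis
      using G.last_step_old[of pre "hd seg"] pre \<open>hd pre \<in> VV (t - 1)\<close> ends run
      by (simp add: run_at_def)
  qed
  ultimately show ?thesis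
    using path ends seg by (auto simp: run_at_def is_path_iff_walk hd_filter)
qed

lemma run_at_present_ends:
  assumes "run_at t pre seg w" "hd seg \<in> VV t'" "last seg \<in> VV t'"
  shows "hd (present t' seg) = hd seg" "last (present t' seg) = last seg"
  using assms hd_filter[of seg "\<lambda>x. x \<in> VV t'"] last_filter[of seg "\<lambda>x. x \<in> VV t'"]
  by (auto simp: run_at_def)

lemma run_at_filter:
  assumes "t' \<le> t" "t \<le> tf" "run_at t pre seg w" "hd seg \<in> VV t'" "last seg \<in> VV t'"
  shows "run_at t' (present t' pre) (present t' seg) w"
  using assms
proof (induction t arbitrary: pre seg rule: dec_induct)
  case base
  then have "set (pre @ seg) \<subseteq> VV t'"
    by (simp add: run_at_def is_path_def)
  then have "present t' pre = pre" "present t' seg = seg"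
    by (auto simp: filter_id_conv)
  then show ?case
    using base by simp
next
  case (step n)
  have "VV t' \<subseteq> VV n"
    using V_mono step by simp
  then have ends: "hd seg \<in> VV n" "last seg \<in> VV n"
    using step.prems by auto
  then have "run_at n (present n pre) (present n seg) w"
    using run_at_filter_step[of "Suc n" pre seg w] step.prems step.hyps by simp
  moreover have "hd (present n seg) = hd seg" "last (present n seg) = last seg"
    using run_at_present_ends[OF step.prems(2) ends] by auto
  moreover have "present t' (present n X) = present t' X" for X
    using \<open>VV t' \<subseteq> VV n\<close> by (auto intro!: filter_cong)
  ultimately show ?case
    using step.IH[of "present n pre" "present n seg"] step by simp
qed

lemma run_at_prefix:
  assumes "run_at t pre (seg @ [b]) w" "seg \<noteq> []"
  shows "run_at t pre seg w"
  using assms is_path_prefix[of "VV t" "EE t" "pre @ seg" "[b]"]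
  by (auto simp: run_at_def successively_append_iff hd_append)

lemma run_at_snoc:
  assumes "run_at t pre seg w" "{last seg, y} \<in> EE t" "y \<in> VV t" "y \<notin> set (pre @ seg)"
    and "PP t y - PP t (last seg) = w"
  shows "run_at t pre (seg @ [y]) w"
  using assms by (auto simp: run_at_def is_path_iff_walk successively_append_iff hd_append)

lemma run_at_common_segment:
  assumes "run_at t pre seg w" "w \<in> unit_dirs" "A \<subseteq> set seg"
  shows "on_common_segment (VV t) (EE t) (PP t) A"
proof -
  have "is_path (VV t) (EE t) seg" "const_step (PP t) w seg"
    using assms(1) is_path_suffix by (auto simp: run_at_def)
  then have "straight_segment (VV t) (EE t) (PP t) seg"
    using const_step_straight[OF _ assms(2)] by (simp add: straight_segment_def)
  then show ?thesis
    using assms(3) by (auto simp: on_common_segment_def)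
qed

lemma run_at_entry_step:
  assumes "run_at t pre seg w" "w \<in> unit_dirs" "2 \<le> length (pre @ seg)"
  shows "PP t (last seg) - PP t (last (butlast (pre @ seg))) \<noteq> - w"
proof
  assume reverse: "PP t (last seg) - PP t (last (butlast (pre @ seg))) = - w"
  have "w \<noteq> 0"
    using unit_dirs_nonzero[OF assms(2)] .
  obtain s0 b where seg: "seg = s0 @ [b]"
    using assms(1) by (cases seg rule: rev_cases) (auto simp: run_at_def)
  show False
  proof (cases "s0 = []")
    case True
    then have "pre \<noteq> []" "perp (- w) w"
      using assms reverse seg by (auto simp: run_at_def)
    then show False
      using assms(2) by (auto simp: unit_dirs_def perp_def)
  next
    case False
    then have "PP t b - PP t (last s0) = w"
      using assms(1) seg by (auto simp: run_at_def successively_append_iff)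
    then have "w = - w"
      using reverse seg False by (simp add: butlast_append)
    then show False
      using \<open>w \<noteq> 0\<close> by (cases w) (simp add: zero_prod_def)
  qed
qed

lemma run_head_precedes_tail:
  assumes t: "t \<le> tf" and run: "run_at t pre seg w" and w: "w \<in> unit_dirs"
    and ends: "hd seg \<noteq> last seg" and r: "1 \<le> r" "r \<le> t" "hd seg \<in> VV r" "last seg \<in> VV r"
  shows "hd seg \<in> VV (r - 1)"
proof (rule ccontr)
  assume new: "hd seg \<notin> VV (r - 1)"
  interpret G: embedded_growth_step u0 "VV (r - 1)" "EE (r - 1)" "PP (r - 1)" "g_dir \<sigma> r"
    "g_ops \<sigma> r" "g_new \<sigma> r" "VV r" "EE r" "PP r"
    using step_at r t by simp
  have "u0 \<in> VV (r - 1)"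
    using anchor_in_V r t by simp
  then have "pre \<noteq> []"
    using run new by (auto simp: run_at_def)
  define pre' where "pre' = present r pre"
  define seg' where "seg' = present r seg"
  have run': "run_at r pre' seg' w" and ends': "hd seg' = hd seg" "last seg' = last seg"
    using run_at_filter[OF r(2) t run r(3,4)] run_at_present_ends[OF run r(3,4)]
    by (simp_all add: pre'_def seg'_def)
  have "hd pre \<in> VV r"
    using run \<open>pre \<noteq> []\<close> anchor_in_V[of r] r t by (simp add: run_at_def)
  then have "pre' \<noteq> []"
    unfolding pre'_def using filter_nonempty[OF \<open>pre \<noteq> []\<close>] by simp
  obtain y rest where seg': "seg' = hd seg # y # rest"
  proof (cases seg')
    case (Cons a l)
    then have "l \<noteq> []"
      using ends' ends by auto
    then show ?thesis
      using that Cons ends' by (cases l) auto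
  qed (use run' in \<open>simp add: run_at_def\<close>)
  let ?x = "last pre'"
  have walk': "walk (EE r) (pre' @ seg')" and distinct': "distinct (pre' @ seg')"
    using run' by (simp_all add: run_at_def is_path_iff_walk)
  have "{?x, hd seg} \<in> EE r"
    using walk' seg' \<open>pre' \<noteq> []\<close> by (simp add: successively_append_iff)
  moreover have "{hd seg, y} \<in> EE r"
    using walk' seg' by (simp add: successively_append_iff)
  moreover have "?x \<noteq> y"
    using distinct' seg' last_in_set[OF \<open>pre' \<noteq> []\<close>] by auto
  ultimately have "PP r (hd seg) - PP r ?x = PP r y - PP r (hd seg)"
    by (metis G.new_node_between(4,5)[OF r(3) new])
  also have "\<dots> = w"
    using run' seg' by (simp add: run_at_def)
  finally have "perp w w"
    using run' \<open>pre' \<noteq> []\<close> seg' by (simp add: run_at_def)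
  then show False
    by (simp add: perp_self_iff unit_dirs_nonzero[OF w])
qed

lemma run_at_avoids_subdivider:
  assumes s: "1 \<le> s" "s \<le> tf" and run: "run_at (s - 1) pre seg w" and w: "w \<in> unit_dirs"
    and g: "g \<in> g_ops \<sigma> s" and sd: "subdiv (EE (s - 1)) (PP (s - 1)) (g_dir \<sigma> s) g"
    and v: "last seg = tgt (EE (s - 1)) (PP (s - 1)) (g_dir \<sigma> s) g"
    and w_dir: "w = - g_dir \<sigma> s"
  shows "g \<notin> set (pre @ seg)"
proof
  interpret G: embedded_growth_step u0 "VV (s - 1)" "EE (s - 1)" "PP (s - 1)" "g_dir \<sigma> s"
    "g_ops \<sigma> s" "g_new \<sigma> s" "VV s" "EE s" "PP s"
    using step_at s by simp
  assume g_in: "g \<in> set (pre @ seg)"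
  have path: "walk (EE (s - 1)) (pre @ seg)" "distinct (pre @ seg)" "last (pre @ seg) = last seg"
    using run by (auto simp: run_at_def is_path_iff_walk)
  have "g \<noteq> last seg"
    using G.tgt_ne[OF sd] v by simp
  have "last (butlast (pre @ seg)) = g"
    using walk_bridge_last_step[OF G.subdivided_edge_bridge[OF g sd] path(1,2) g_in]
      path(3) \<open>g \<noteq> last seg\<close> v by simp
  moreover have "2 \<le> length (pre @ seg)"
    using g_in path(3) \<open>g \<noteq> last seg\<close>
    by (cases "pre @ seg" rule: rev_cases) (auto simp: Suc_le_eq dest: length_pos_if_in_set)
  moreover have "PP (s - 1) (last seg) - PP (s - 1) g = g_dir \<sigma> s"
    using G.tgt(2)[OF sd] v by simp
  ultimately show False
    using run_at_entry_step[OF run w] w_dir by simp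
qed

lemma run_at_new_tail_direct:
  assumes s: "1 \<le> s" "s \<le> tf" and run: "run_at s pre (seg @ [b]) w" and w: "w \<in> unit_dirs"
    and seg: "seg \<noteq> []" "hd seg \<in> VV (s - 1)" and g: "g \<in> g_ops \<sigma> s" "last seg = g"
  obtains pre' seg' where "run_at (s - 1) pre' seg' w" "hd seg' = hd seg" "last seg' = g"
    "on_common_segment (VV s) (EE s) (PP s) {hd seg, g, b}"
proof -
  have run_seg: "run_at s pre seg w"
    using run_at_prefix[OF run seg(1)] .
  have "g \<in> VV (s - 1)"
    using g embedded_growth_step.Ops_subset[OF step_at[OF s]] by auto
  then have "run_at (s - 1) (present (s - 1) pre) (present (s - 1) seg) w"
    "hd (present (s - 1) seg) = hd seg" "last (present (s - 1) seg) = g"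
    using run_at_filter[OF _ s(2) run_seg] run_at_present_ends[OF run_seg] seg(2) g(2) by auto
  moreover have "{hd seg, g, b} \<subseteq> set (seg @ [b])"
    using seg(1) g(2) by auto
  then have "on_common_segment (VV s) (EE s) (PP s) {hd seg, g, b}"
    using run_at_common_segment[OF run w] by blast
  ultimately show ?thesis
    using that by blast
qed

lemma run_at_new_tail_subdivided:
  assumes s: "1 \<le> s" "s \<le> tf" and run: "run_at s pre (seg @ [b]) w" and w: "w \<in> unit_dirs"
    and seg: "seg \<noteq> []" "hd seg \<in> VV (s - 1)"
    and g: "g \<in> g_ops \<sigma> s" "b = g_new \<sigma> s g"
    and sd: "subdiv (EE (s - 1)) (PP (s - 1)) (g_dir \<sigma> s) g"
    and v: "last seg = tgt (EE (s - 1)) (PP (s - 1)) (g_dir \<sigma> s) g"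
  obtains pre' seg' where "run_at (s - 1) pre' seg' w" "hd seg' = hd seg" "last seg' = g"
    "on_common_segment (VV s) (EE s) (PP s) {hd seg, g, b}"
proof -
  interpret G: embedded_growth_step u0 "VV (s - 1)" "EE (s - 1)" "PP (s - 1)" "g_dir \<sigma> s"
    "g_ops \<sigma> s" "g_new \<sigma> s" "VV s" "EE s" "PP s"
    using step_at s by simp
  define dd where "dd = g_dir \<sigma> s"
  have gV: "g \<in> VV (s - 1)" and vV: "last seg \<in> VV (s - 1)" and "b \<notin> VV (s - 1)"
    using g G.Ops_subset G.tgt_in_V[OF sd] G.new_notin_V v by auto
  have "PP s b - PP s (last seg) = w"
    using run seg by (simp add: run_at_def successively_append_iff)
  moreover have "PP s (last seg) - PP s b = dd"
    using G.pos'_tgt_offset[OF g(1) sd] g(2) v dd_def by simp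
  ultimately have w_dd: "w = - dd"
    by (metis minus_diff_eq)
  define Fp where "Fp = present (s - 1) pre"
  define Fq where "Fq = present (s - 1) seg"
  have run_seg: "run_at s pre seg w"
    using run_at_prefix[OF run seg(1)] .
  have run_Fq: "run_at (s - 1) Fp Fq w" and ends_Fq: "hd Fq = hd seg" "last Fq = last seg"
    using run_at_filter[OF _ s(2) run_seg] run_at_present_ends[OF run_seg] seg vV Fp_def Fq_def
    by auto
  have g_fresh: "g \<notin> set (Fp @ Fq)"
    using run_at_avoids_subdivider[OF s run_Fq w g(1) sd] ends_Fq v w_dd dd_def by simp
  have "{last Fq, g} \<in> EE (s - 1)"
    using G.tgt(1)[OF sd] ends_Fq v by (simp add: insert_commute)
  moreover have "PP (s - 1) g - PP (s - 1) (last Fq) = w"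
    using G.tgt(2)[OF sd] ends_Fq v dd_def w_dd by simp
  ultimately have "run_at (s - 1) Fp (Fq @ [g]) w"
    using run_at_snoc[OF run_Fq _ gV g_fresh] by blast
  moreover have "hd (Fq @ [g]) = hd seg"
    using ends_Fq run_Fq by (simp add: hd_append run_at_def)
  moreover have "on_common_segment (VV s) (EE s) (PP s) {hd seg, g, b}"
  proof -
    have "g \<notin> set (pre @ seg @ [b])"
      using g_fresh gV \<open>b \<notin> VV (s - 1)\<close> Fp_def Fq_def by auto
    moreover have "{last (seg @ [b]), g} \<in> EE s"
      using G.new_edges(1)[OF g(1)] g(2) by (simp add: insert_commute)
    moreover have "g \<in> VV s"
      using gV G.V'_eq by auto
    moreover have "PP s g - PP s (last (seg @ [b])) = w"
      using G.pos'_new_offset[OF g(1)] g(2) w_dd dd_def by (metis last_snoc minus_diff_eq)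
    ultimately have "run_at s pre ((seg @ [b]) @ [g]) w"
      using run_at_snoc[OF run] by blast
    then show ?thesis
      using run_at_common_segment[OF _ w] seg(1) by (auto intro: hd_in_set)
  qed
  ultimately show ?thesis
    using that by simp
qed

lemma run_at_new_tail:
  assumes s: "1 \<le> s" "s \<le> tf" and run: "run_at s pre seg w" and w: "w \<in> unit_dirs"
    and c: "hd seg \<in> VV (s - 1)" and b: "last seg \<notin> VV (s - 1)"
  obtains g pre' seg' where "gen_at \<sigma> s g (last seg)"
    "on_common_segment (VV s) (EE s) (PP s) {hd seg, g, last seg}"
    "run_at (s - 1) pre' seg' w" "hd seg' = hd seg" "last seg' = g"
proof -
  interpret G: embedded_growth_step u0 "VV (s - 1)" "EE (s - 1)" "PP (s - 1)" "g_dir \<sigma> s"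
    "g_ops \<sigma> s" "g_new \<sigma> s" "VV s" "EE s" "PP s"
    using step_at s by simp
  have "seg \<noteq> []" "set seg \<subseteq> VV s"
    using run by (auto simp: run_at_def is_path_def)
  then have "last seg \<in> VV s"
    by auto
  define seg0 where "seg0 = butlast seg"
  have run0: "run_at s pre (seg0 @ [last seg]) w"
    using run \<open>seg \<noteq> []\<close> by (simp add: seg0_def)
  have "seg0 \<noteq> []"
    using \<open>seg \<noteq> []\<close> c b by (cases seg rule: rev_cases) (auto simp: seg0_def)
  then have c0: "hd seg0 = hd seg" "hd seg0 \<in> VV (s - 1)"
    using c \<open>seg \<noteq> []\<close> by (cases seg rule: rev_cases, simp_all add: seg0_def)+
  obtain g where g: "g \<in> g_ops \<sigma> s" "last seg = g_new \<sigma> s g"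
    using G.new_node_cases[OF \<open>last seg \<in> VV s\<close> b] by blast
  then have gen: "gen_at \<sigma> s g (last seg)"
    using s by (simp add: gen_at_def)
  have "{last seg0, last seg} \<in> EE s"
    using run0 \<open>seg0 \<noteq> []\<close> by (simp add: run_at_def is_path_iff_walk successively_append_iff)
  then have "last seg0 = g \<or> (G.sd g \<and> last seg0 = G.tg g)"
    using G.new_node_neighbour[OF g(1)] g(2) by simp
  then obtain pre' seg' where "run_at (s - 1) pre' seg' w" "hd seg' = hd seg0" "last seg' = g"
    "on_common_segment (VV s) (EE s) (PP s) {hd seg0, g, last seg}"
    using run_at_new_tail_direct[OF s run0 w \<open>seg0 \<noteq> []\<close> c0(2) g(1)]
      run_at_new_tail_subdivided[OF s run0 w \<open>seg0 \<noteq> []\<close> c0(2) g] by blast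
  then show ?thesis
    using that gen c0(1) by simp
qed

lemma run_at_last_ne_anchor:
  assumes "run_at t pre seg w" "hd seg \<noteq> last seg"
  shows "last seg \<noteq> u0"
proof -
  have path: "distinct (pre @ seg)" "hd (pre @ seg) = u0" "seg \<noteq> []"
    using assms(1) by (auto simp: run_at_def is_path_def)
  show ?thesis
  proof (cases "pre = []")
    case False
    then have "u0 \<in> set pre"
      using path(2) by (metis hd_append2 hd_in_set)
    then show ?thesis
      using path(1,3) by auto
  qed (use path(2) assms(2) in simp)
qed

lemma creation_step:
  assumes "t \<le> tf" "x \<in> VV t" "x \<notin> VV 0"
  obtains s where "1 \<le> s" "s \<le> t" "x \<notin> VV (s - 1)" "x \<in> VV s"
proof -
  define s where "s = (LEAST s. x \<in> VV s)"
  have "x \<in> VV s" "s \<le> t"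
    unfolding s_def using assms(2) by (auto intro: LeastI Least_le)
  moreover have "s \<noteq> 0"
    using \<open>x \<in> VV s\<close> assms(3) by (cases s) auto
  moreover have "x \<notin> VV (s - 1)"
    using \<open>s \<noteq> 0\<close> not_less_Least[of "s - 1" "\<lambda>s. x \<in> VV s"] by (simp add: s_def)
  ultimately show ?thesis
    using that[of s] by (simp add: Suc_le_eq)
qed

lemma run_tail_created_after_head:
  assumes t: "t \<le> tf" and run: "run_at t pre seg w" and w: "w \<in> unit_dirs"
    and ends: "hd seg \<noteq> last seg"
  obtains s where "1 \<le> s" "s \<le> t" "last seg \<notin> VV (s - 1)" "last seg \<in> VV s"
    "hd seg \<in> VV (s - 1)"
proof -
  have path: "set (pre @ seg) \<subseteq> VV t" "seg \<noteq> []"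
    using run by (auto simp: run_at_def is_path_def)
  have "last seg \<notin> VV 0"
    using run_at_last_ne_anchor[OF run ends] initial_V by simp
  moreover have "last seg \<in> VV t"
    using path by auto
  ultimately obtain s where s: "1 \<le> s" "s \<le> t" "last seg \<notin> VV (s - 1)" "last seg \<in> VV s"
    using creation_step[OF t] by metis
  have "s - 1 \<le> tf"
    using s t by simp
  have "hd seg \<in> VV (s - 1)"
  proof (cases "hd seg \<in> VV 0")
    case True
    then show ?thesis
      using V_mono[of 0 "s - 1"] \<open>s - 1 \<le> tf\<close> by auto
  next
    case False
    moreover have "hd seg \<in> VV t"
      using path by auto
    ultimately obtain r where r: "1 \<le> r" "r \<le> t" "hd seg \<notin> VV (r - 1)" "hd seg \<in> VV r"
      using creation_step[OF t] by metis
    have "r < s"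
    proof (rule ccontr)
      assume "\<not> r < s"
      then have "last seg \<in> VV r"
        using s V_mono[of s r] r t by auto
      then show False
        using run_head_precedes_tail[OF t run w ends r(1,2,4)] r(3) by blast
    qed
    then have "r \<le> s - 1"
      by simp
    then show ?thesis
      using V_mono \<open>s - 1 \<le> tf\<close> r(4) by blast
  qed
  then show ?thesis
    using that s by blast
qed

lemma run_at_maps_to:
  assumes "t \<le> tf" "run_at t pre seg w" "w \<in> unit_dirs" "hd seg \<noteq> last seg"
  shows "maps_to \<sigma> (hd seg) (last seg)"
  using assms
proof (induction t arbitrary: pre seg rule: less_induct)
  case (less t)
  note t = less.prems(1) and run = less.prems(2) and w = less.prems(3)
  obtain s where s: "1 \<le> s" "s \<le> t" and b: "last seg \<notin> VV (s - 1)" "last seg \<in> VV s"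
    and c: "hd seg \<in> VV (s - 1)"
    using run_tail_created_after_head[OF less.prems] by blast
  have s_tf: "s \<le> tf"
    using s t by simp
  have "hd seg \<in> VV s"
    using V_mono[of "s - 1" s] s_tf c by auto
  then have run_s: "run_at s (present s pre) (present s seg) w"
    and ends_s: "hd (present s seg) = hd seg" "last (present s seg) = last seg"
    using run_at_filter[OF s(2) t run _ b(2)] run_at_present_ends[OF run _ b(2)] by auto
  obtain g pre' seg' where gen: "gen_at \<sigma> s g (last seg)"
    and segment: "on_common_segment (VV s) (EE s) (PP s) {hd seg, g, last seg}"
    and run': "run_at (s - 1) pre' seg' w" "hd seg' = hd seg" "last seg' = g"
    using run_at_new_tail[OF s(1) s_tf run_s w] ends_s c b(1) by metis
  have "g = hd seg \<or> gen_chain \<sigma> (hd seg) g"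
  proof (cases "g = hd seg")
    case False
    then have "maps_to \<sigma> (hd seg) g"
      using less.IH[of "s - 1" pre' seg'] run' s w t by auto
    then show ?thesis
      by (simp add: maps_to_gen_chain)
  qed simp
  then show ?case
    unfolding maps_to_def maps_at_def using gen segment s by blast
qed

lemma run_at_final_shape:
  assumes grows: "grows_from_single \<sigma> u0 V E pos"
    and path: "is_path V E (pre @ seg)" "hd (pre @ seg) = u0" "seg \<noteq> []"
    and straight: "const_step pos w seg" "pre \<noteq> [] \<Longrightarrow> perp (pos (hd seg) - pos (last pre)) w"
  shows "run_at tf pre seg w"
proof -
  obtain c where c: "\<forall>x\<in>V. PP tf x = pos x + c" and final: "VV tf = V" "EE tf = E"
    using grows by (auto simp: grows_from_single_def)
  have V: "set (pre @ seg) \<subseteq> V"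
    using path(1) by (simp add: is_path_def)
  then have "\<forall>x\<in>set seg. PP tf x = pos x + c"
    using c by auto
  then have "const_step (PP tf) w seg"
    using const_step_translate straight(1) by blast
  moreover have "PP tf (hd seg) - PP tf (last pre) = pos (hd seg) - pos (last pre)" if "pre \<noteq> []"
  proof -
    have "hd seg \<in> V" "last pre \<in> V"
      using V that path(3) by auto
    then show ?thesis
      using c by simp
  qed
  ultimately show ?thesis
    using path straight(2) final by (simp add: run_at_def)
qed

end

subsection \<open>Turning points\<close>

lemma path_step_unit:
  assumes "is_shape V E pos" "is_path V E ps" "Suc k < length ps"
  shows "pos (ps ! Suc k) - pos (ps ! k) \<in> unit_dirs"
proof -
  have "{ps ! k, ps ! Suc k} \<in> E"
    using assms(2,3) by (simp add: is_path_def)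
  moreover have "\<forall>e\<in>E. \<exists>x y. e = {x, y} \<and> x \<noteq> y \<and> x \<in> V \<and> y \<in> V \<and> grid_adj (pos x) (pos y)"
    using assms(1) by (simp add: is_shape_def)
  ultimately obtain x y where "{ps ! k, ps ! Suc k} = {x, y}" "grid_adj (pos x) (pos y)"
    by blast
  then have "grid_adj (pos (ps ! k)) (pos (ps ! Suc k))"
    by (metis doubleton_eq_iff grid_adj_sym)
  then show ?thesis
    by (simp add: grid_adj_iff_unit_dirs)
qed

text \<open>The path cannot reverse its direction, since it visits no grid point twice.\<close>
lemma path_straight_between_turns:
  assumes shape: "is_shape V E pos" and path: "is_path V E ps"
    and ab: "a \<le> k" "k < b" "b < length ps"
    and straight: "\<And>j. a < j \<Longrightarrow> j < b \<Longrightarrow> \<not> is_turning pos ps j"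
  shows "pos (ps ! Suc k) - pos (ps ! k) = pos (ps ! Suc a) - pos (ps ! a)"
  using ab
proof (induction k rule: dec_induct)
  case (step n)
  let ?u = "pos (ps ! Suc n) - pos (ps ! n)" and ?v = "pos (ps ! Suc (Suc n)) - pos (ps ! Suc n)"
  have units: "?u \<in> unit_dirs" "?v \<in> unit_dirs"
    using path_step_unit[OF shape path] step by auto
  have "\<not> perp ?v ?u"
    using straight[of "Suc n"] step by (auto simp: is_turning_def perp_commute)
  moreover have "?u \<noteq> - ?v"
  proof
    assume "?u = - ?v"
    then have "pos (ps ! Suc (Suc n)) = pos (ps ! n)"
      by (simp add: algebra_simps)
    moreover have len: "Suc (Suc n) < length ps"
      using step by simp
    then have "ps ! Suc (Suc n) \<in> V" "ps ! n \<in> V"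
      using path by (auto simp: is_path_def)
    moreover have "inj_on pos V"
      using shape by (simp add: is_shape_def)
    ultimately have "ps ! Suc (Suc n) = ps ! n"
      by (metis inj_onD)
    then show False
      using path len nth_eq_iff_index_eq[of ps n "Suc (Suc n)"] by (simp add: is_path_def)
  qed
  ultimately have "?v = ?u"
    using unit_dirs_not_perp[OF units(2,1)] by auto
  then show ?case
    using step by simp
qed simp

lemma consecutive_turning_indices:
  assumes "Suc i < length (turning_points pos ps)"
  obtains a b where "a < b" "b < length ps" "is_turning pos ps a"
    "turning_points pos ps ! i = ps ! a" "turning_points pos ps ! Suc i = ps ! b"
    "\<And>j. a < j \<Longrightarrow> j < b \<Longrightarrow> \<not> is_turning pos ps j"
proof -
  define idx where "idx = filter (is_turning pos ps) [0..<length ps]"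
  have tp: "turning_points pos ps = map (\<lambda>k. ps ! k) idx"
    by (simp add: turning_points_def idx_def)
  have i: "Suc i < length idx"
    using assms tp by simp
  have sorted: "sorted_wrt (<) idx"
    unfolding idx_def by (intro sorted_wrt_filter) (simp add: sorted_wrt_upt)
  have idx_mem: "idx ! m < length ps \<and> is_turning pos ps (idx ! m)" if "m < length idx" for m
    using nth_mem[OF that] by (simp add: idx_def)
  have idx_less: "m < n" if "m < length idx" "n < length idx" "idx ! m < idx ! n" for m n
    using sorted_nth_mono[OF strict_sorted_imp_sorted[OF sorted], of n m] that by force
  show ?thesis
  proof (rule that)
    show "idx ! i < idx ! Suc i"
      using sorted_wrt_nth_less[OF sorted _ i] by simp
    show "\<not> is_turning pos ps j" if "idx ! i < j" "j < idx ! Suc i" for j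
    proof
      assume "is_turning pos ps j"
      then have "j \<in> set idx"
        using that idx_mem[OF i] by (simp add: idx_def is_turning_def)
      then obtain m where "m < length idx" "idx ! m = j"
        by (metis in_set_conv_nth)
      then show False
        using idx_less[of i m] idx_less[of m "Suc i"] that i by simp
    qed
  qed (use idx_mem i tp in auto)
qed

lemma turning_points_straight_run:
  assumes shape: "is_shape V E pos" and path: "is_path V E ps"
    and i: "Suc i < length (turning_points pos ps)"
  obtains pre seg rest w where "ps = pre @ seg @ rest" "w \<in> unit_dirs" "seg \<noteq> []"
    "hd seg = turning_points pos ps ! i" "last seg = turning_points pos ps ! Suc i"
    "hd seg \<noteq> last seg" "const_step pos w seg"
    "pre \<noteq> [] \<Longrightarrow> perp (pos (hd seg) - pos (last pre)) w"
proof -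
  obtain a b where ab: "a < b" "b < length ps" "is_turning pos ps a"
    and tp: "turning_points pos ps ! i = ps ! a" "turning_points pos ps ! Suc i = ps ! b"
    and straight: "\<And>j. a < j \<Longrightarrow> j < b \<Longrightarrow> \<not> is_turning pos ps j"
    using consecutive_turning_indices[OF i] by blast
  define w where "w = pos (ps ! Suc a) - pos (ps ! a)"
  define seg where "seg = take (Suc b - a) (drop a ps)"
  have "drop (Suc b - a) (drop a ps) = drop (Suc b) ps"
    using ab by simp
  moreover have "ps = take a ps @ take (Suc b - a) (drop a ps) @ drop (Suc b - a) (drop a ps)"
    by (simp only: append_take_drop_id)
  ultimately have split: "ps = take a ps @ seg @ drop (Suc b) ps"
    by (simp add: seg_def)
  have len_seg: "length seg = Suc b - a"
    using ab by (simp add: seg_def)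
  have seg_nth: "seg ! m = ps ! (a + m)" if "m < Suc b - a" for m
    using that ab by (simp add: seg_def)
  have "seg \<noteq> []"
    using len_seg ab by auto
  moreover have "hd seg = ps ! a"
    using \<open>seg \<noteq> []\<close> seg_nth[of 0] ab by (simp add: hd_conv_nth)
  moreover have "last seg = ps ! b"
    using \<open>seg \<noteq> []\<close> seg_nth[of "b - a"] len_seg ab by (simp add: last_conv_nth)
  moreover have "ps ! a \<noteq> ps ! b"
    using path ab nth_eq_iff_index_eq[of ps a b] by (simp add: is_path_def)
  moreover have "const_step pos w seg"
    unfolding successively_conv_nth w_def
    using path_straight_between_turns[OF shape path _ _ ab(2) straight] seg_nth len_seg ab by auto
  moreover have "perp (pos (ps ! a) - pos (last (take a ps))) w" if "take a ps \<noteq> []"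
  proof -
    have "0 < a" "a \<noteq> length ps - 1"
      using that ab by auto
    then show ?thesis
      using ab(3) that by (simp add: is_turning_def w_def last_conv_nth min_def)
  qed
  moreover have "w \<in> unit_dirs"
    using path_step_unit[OF shape path, of a] ab by (simp add: w_def)
  ultimately show ?thesis
    using that[OF split] tp by simp
qed

theorem lemma3p2:
  fixes V :: "'a set" and E :: "'a set set" and pos :: "'a \<Rightarrow> int \<times> int"
    and \<sigma> :: "'a growth" and u0 :: 'a and ps :: "'a list"
  assumes "tree_shape V E pos"
    and "u0 \<in> V"
    and "grows_from_single \<sigma> u0 V E pos"
    and "root_leaf_path V E u0 ps"
  shows "\<forall>i. Suc i < length (turning_points pos ps) \<longrightarrow>
           maps_to \<sigma> (turning_points pos ps ! i) (turning_points pos ps ! Suc i)"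
proof (intro allI impI)
  fix i assume i: "Suc i < length (turning_points pos ps)"
  interpret growth_process \<sigma> u0
    using assms(3) by unfold_locales (auto simp: grows_from_single_def)
  have shape: "is_shape V E pos" and path: "is_path V E ps" "hd ps = u0"
    using assms(1,4) by (auto simp: tree_shape_def root_leaf_path_def)
  obtain pre seg rest w where ps: "ps = pre @ seg @ rest" and w: "w \<in> unit_dirs"
    and ends: "seg \<noteq> []" "hd seg = turning_points pos ps ! i"
      "last seg = turning_points pos ps ! Suc i" "hd seg \<noteq> last seg"
    and straight: "const_step pos w seg" "pre \<noteq> [] \<Longrightarrow> perp (pos (hd seg) - pos (last pre)) w"
    using turning_points_straight_run[OF shape path(1) i] by blast
  have "is_path V E (pre @ seg)"
    using path ps ends(1) is_path_prefix[of V E "pre @ seg" rest] by simp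
  moreover have "hd (pre @ seg) = u0"
    using path(2) ps ends(1) by (cases pre) simp_all
  ultimately have "run_at tf pre seg w"
    using run_at_final_shape[OF assms(3)] ends(1) straight by blast
  then show "maps_to \<sigma> (turning_points pos ps ! i) (turning_points pos ps ! Suc i)"
    using run_at_maps_to[OF le_refl _ w ends(4)] ends by simp
qed

end
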